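(* Assume $n\ge 2$ and $\chi\neq\{0\}$. The reshuffling property and the source-anonymous contributions property are independent: there exists a risk-sharing rule on $\chi^n$ that satisfies the reshuffling property but does not have source-anonymous contributions, and there exists a risk-sharing rule on $\chi^n$ that has source-anonymous contributions but does not satisfy the reshuffling property.
   Context: Fix a probability space $(\Omega,\mathcal{F},\mathbb{P})$ and an integer $n$. Let $\chi$ be a convex cone of non-negative random variables on this space (closed under addition and under multiplication by positive scalars) with $0\in\chi$. Equalities between random variables are understood almost surely. A pool is a vector $\boldsymbol{X}=(X_1,\ldots,X_n)\in\chi^n$, with aggregate loss $S_{\boldsymbol{X}}=\sum_{i=1}^n X_i$. A risk-sharing (RS) rule is a mapping $\boldsymbol{C}$ assigning to every pool $\boldsymbol{X}\in\chi^n$ a vector $\boldsymbol{C}[\boldsymbol{X}]=(C_1[\boldsymbol{X}],\ldots,C_n[\boldsymbol{X}])$ of real-valued random variables satisfying $\sum_{i=1}^n C_i[\boldsymbol{X}]=S_{\boldsymbol{X}}$. For a permutation $\pi$ of $\{1,\ldots,n\}$, $\boldsymbol{X}^\pi=(X_{\pi(1)},\ldots,X_{\pi(n)})$. Reshuffling property: $C_i[\boldsymbol{X}^\pi]=C_{\pi(i)}[\boldsymbol{X}]$ for all pools $\boldsymbol{X}$, permutations $\pi$ and indices $i$. Source-anonymous contributions: $C_i[\boldsymbol{X}^\pi]=C_i[\boldsymbol{X}]$ for all pools $\boldsymbol{X}$, permutations $\pi$ and indices $i$. *)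

theory Defs
  imports "HOL-Probability.Probability" "HOL-Combinatorics.Permutations" "HOL-Library.FuncSet"
begin

text \<open>Random variables are real-valued measurable functions on the probability space M;
  (K plays the role of the cone chi) equalities between random variables are understood almost surely.\<close>

definition rv_cone :: "'a measure \<Rightarrow> ('a \<Rightarrow> real) set \<Rightarrow> bool" where
  "rv_cone M K \<longleftrightarrow>
     K \<subseteq> borel_measurable M \<and>
     (\<forall>X\<in>K. AE \<omega> in M. 0 \<le> X \<omega>) \<and>
     (\<lambda>_. 0) \<in> K \<and>
     (\<forall>X\<in>K. \<forall>Y\<in>K. (\<lambda>\<omega>. X \<omega> + Y \<omega>) \<in> K) \<and>
     (\<forall>X\<in>K. \<forall>c::real. c > 0 \<longrightarrow> (\<lambda>\<omega>. c * X \<omega>) \<in> K)"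

definition pools :: "('a \<Rightarrow> real) set \<Rightarrow> nat \<Rightarrow> (nat \<Rightarrow> 'a \<Rightarrow> real) set" where
  "pools K n = {0..<n} \<rightarrow>\<^sub>E K"

definition agg :: "nat \<Rightarrow> (nat \<Rightarrow> 'a \<Rightarrow> real) \<Rightarrow> 'a \<Rightarrow> real" where
  "agg n X = (\<lambda>\<omega>. \<Sum>i<n. X i \<omega>)"

definition rs_rule :: "'a measure \<Rightarrow> ('a \<Rightarrow> real) set \<Rightarrow> nat \<Rightarrow>
    ((nat \<Rightarrow> 'a \<Rightarrow> real) \<Rightarrow> nat \<Rightarrow> 'a \<Rightarrow> real) \<Rightarrow> bool" where
  "rs_rule M K n C \<longleftrightarrow>
     (\<forall>X\<in>pools K n. \<forall>i<n. C X i \<in> borel_measurable M) \<and>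
     (\<forall>X\<in>pools K n. AE \<omega> in M. (\<Sum>i<n. C X i \<omega>) = agg n X \<omega>) \<and>
     (\<forall>X\<in>pools K n. \<forall>Y\<in>pools K n.
        (\<forall>i<n. AE \<omega> in M. X i \<omega> = Y i \<omega>) \<longrightarrow> (\<forall>i<n. AE \<omega> in M. C X i \<omega> = C Y i \<omega>))"

definition reshuffling :: "'a measure \<Rightarrow> ('a \<Rightarrow> real) set \<Rightarrow> nat \<Rightarrow>
    ((nat \<Rightarrow> 'a \<Rightarrow> real) \<Rightarrow> nat \<Rightarrow> 'a \<Rightarrow> real) \<Rightarrow> bool" where
  "reshuffling M K n C \<longleftrightarrow>
     (\<forall>X\<in>pools K n. \<forall>\<pi>. \<pi> permutes {0..<n} \<longrightarrow>
        (\<forall>i<n. AE \<omega> in M. C (X \<circ> \<pi>) i \<omega> = C X (\<pi> i) \<omega>))"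

definition source_anonymous :: "'a measure \<Rightarrow> ('a \<Rightarrow> real) set \<Rightarrow> nat \<Rightarrow>
    ((nat \<Rightarrow> 'a \<Rightarrow> real) \<Rightarrow> nat \<Rightarrow> 'a \<Rightarrow> real) \<Rightarrow> bool" where
  "source_anonymous M K n C \<longleftrightarrow>
     (\<forall>X\<in>pools K n. \<forall>\<pi>. \<pi> permutes {0..<n} \<longrightarrow>
        (\<forall>i<n. AE \<omega> in M. C (X \<circ> \<pi>) i \<omega> = C X i \<omega>))"

end

theory Submission
  imports Defs
begin

text \<open>The identity rule \<open>C[X] = X\<close> reshuffles trivially, but source anonymity would force all
  members of every pool to carry a.s. equal losses. The rule that charges the whole aggregate loss
  to member 0 depends on the pool only through the permutation-invariant sum, hence is
  source-anonymous, but reshuffling would force every aggregate loss to vanish a.s. The pool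
  \<open>(Z, 0, \<dots>, 0)\<close> with \<open>Z\<close> not a.s. zero refutes both conclusions.\<close>

definition all_to_first :: "nat \<Rightarrow> (nat \<Rightarrow> 'a \<Rightarrow> real) \<Rightarrow> nat \<Rightarrow> 'a \<Rightarrow> real" where
  "all_to_first n X i = (if i = 0 then agg n X else (\<lambda>_. 0))"

definition single_loss_pool :: "nat \<Rightarrow> ('a \<Rightarrow> real) \<Rightarrow> nat \<Rightarrow> 'a \<Rightarrow> real" where
  "single_loss_pool n Z = (\<lambda>i\<in>{0..<n}. if i = 0 then Z else (\<lambda>_. 0))"

lemma pools_measurable:
  assumes "K \<subseteq> borel_measurable M" and "X \<in> pools K n" and "i < n"
  shows "X i \<in> borel_measurable M"
  using assms unfolding pools_def by auto

lemma agg_permute: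
  assumes "\<pi> permutes {0..<n}"
  shows "agg n (X \<circ> \<pi>) = agg n X"
proof
  fix \<omega>
  have "\<pi> permutes {..<n}" using assms by (simp add: atLeast0LessThan)
  then show "agg n (X \<circ> \<pi>) \<omega> = agg n X \<omega>"
    unfolding agg_def using sum.permute[of \<pi> "{..<n}" "\<lambda>i. X i \<omega>"] by (simp add: comp_def)
qed

lemma agg_AE_cong:
  assumes "\<forall>i<n. AE \<omega> in M. X i \<omega> = Y i \<omega>"
  shows "AE \<omega> in M. agg n X \<omega> = agg n Y \<omega>"
proof -
  have "AE \<omega> in M. \<forall>i\<in>{..<n}. X i \<omega> = Y i \<omega>"
    using assms by (subst AE_finite_all) auto
  then show ?thesis unfolding agg_def by (rule eventually_mono) simp
qed

lemma single_loss_pool_in_pools: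
  assumes "Z \<in> K" and "(\<lambda>_. 0) \<in> K"
  shows "single_loss_pool n Z \<in> pools K n"
  using assms unfolding single_loss_pool_def pools_def by auto

lemma agg_single_loss_pool:
  assumes "0 < n"
  shows "agg n (single_loss_pool n Z) = Z"
proof
  fix \<omega>
  have "agg n (single_loss_pool n Z) \<omega> = (\<Sum>i<n. if i = 0 then Z \<omega> else 0)"
    unfolding agg_def single_loss_pool_def by (rule sum.cong) auto
  also have "\<dots> = Z \<omega>" using assms by (simp add: sum.delta)
  finally show "agg n (single_loss_pool n Z) \<omega> = Z \<omega>" .
qed

lemma rs_rule_id:
  assumes "K \<subseteq> borel_measurable M"
  shows "rs_rule M K n (\<lambda>X. X)"
  using pools_measurable[OF assms] unfolding rs_rule_def agg_def by auto

lemma reshuffling_id: "reshuffling M K n (\<lambda>X. X)"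
  unfolding reshuffling_def by auto

lemma source_anonymous_id_AE_eq:
  assumes "source_anonymous M K n (\<lambda>X. X)" and "X \<in> pools K n" and "i < n" and "j < n"
  shows "AE \<omega> in M. X j \<omega> = X i \<omega>"
proof -
  have "Transposition.transpose i j permutes {0..<n}"
    using assms(3,4) by (intro permutes_swap_id) auto
  then have "AE \<omega> in M. (X \<circ> Transposition.transpose i j) i \<omega> = X i \<omega>"
    using assms unfolding source_anonymous_def by blast
  then show ?thesis by simp
qed

lemma rs_rule_all_to_first:
  assumes "K \<subseteq> borel_measurable M" and "0 < n"
  shows "rs_rule M K n (all_to_first n)"
  unfolding rs_rule_def
proof (intro conjI ballI allI impI)
  fix X i assume "X \<in> pools K n" "i < n"
  then show "all_to_first n X i \<in> borel_measurable M"
    unfolding all_to_first_def agg_def using pools_measurable[OF assms(1)] by auto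
next
  fix X :: "nat \<Rightarrow> 'a \<Rightarrow> real"
  have "(\<Sum>i<n. all_to_first n X i \<omega>) = agg n X \<omega>" for \<omega>
    unfolding all_to_first_def using assms(2)
    by (simp add: if_distrib[where f="\<lambda>f. f \<omega>"] sum.delta cong: if_cong)
  then show "AE \<omega> in M. (\<Sum>i<n. all_to_first n X i \<omega>) = agg n X \<omega>" by simp
next
  fix X Y :: "nat \<Rightarrow> 'a \<Rightarrow> real" and i
  assume "\<forall>i<n. AE \<omega> in M. X i \<omega> = Y i \<omega>"
  then show "AE \<omega> in M. all_to_first n X i \<omega> = all_to_first n Y i \<omega>"
    unfolding all_to_first_def using agg_AE_cong by auto
qed

lemma source_anonymous_all_to_first: "source_anonymous M K n (all_to_first n)"
  unfolding source_anonymous_def all_to_first_def by (simp add: agg_permute)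

lemma reshuffling_all_to_first_AE_agg_zero:
  assumes "reshuffling M K n (all_to_first n)" and "X \<in> pools K n" and "1 < n"
  shows "AE \<omega> in M. agg n X \<omega> = 0"
proof -
  have "Transposition.transpose 0 1 permutes {0..<n}"
    using assms(3) by (intro permutes_swap_id) auto
  then have "AE \<omega> in M. all_to_first n (X \<circ> Transposition.transpose 0 1) 1 \<omega>
      = all_to_first n X (Transposition.transpose 0 1 1) \<omega>"
    using assms unfolding reshuffling_def by blast
  moreover have "Transposition.transpose 0 1 (1::nat) = 0" by simp
  ultimately have "AE \<omega> in M. 0 = agg n X \<omega>" by (simp add: all_to_first_def)
  then show ?thesis by (rule eventually_mono) simp
qed

theorem proposition2:
  fixes M :: "'a measure" and K :: "('a \<Rightarrow> real) set" and n :: nat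
  assumes "prob_space M"
    and "rv_cone M K"
    and "n \<ge> 2"
    and "\<exists>X\<in>K. \<not> (AE \<omega> in M. X \<omega> = 0)"
  shows "(\<exists>C. rs_rule M K n C \<and> reshuffling M K n C \<and> \<not> source_anonymous M K n C) \<and>
         (\<exists>C. rs_rule M K n C \<and> source_anonymous M K n C \<and> \<not> reshuffling M K n C)"
proof -
  obtain Z where "Z \<in> K" and Z_nonzero: "\<not> (AE \<omega> in M. Z \<omega> = 0)" using assms(4) by blast
  have K_meas: "K \<subseteq> borel_measurable M" and "(\<lambda>_. 0) \<in> K"
    using assms(2) unfolding rv_cone_def by auto
  define X where "X = single_loss_pool n Z"
  have X_pool: "X \<in> pools K n"
    unfolding X_def using \<open>Z \<in> K\<close> \<open>(\<lambda>_. 0) \<in> K\<close> by (rule single_loss_pool_in_pools)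
  have "1 < n" using assms(3) by simp
  have "\<not> source_anonymous M K n (\<lambda>X. X)"
  proof
    assume "source_anonymous M K n (\<lambda>X. X)"
    from source_anonymous_id_AE_eq[OF this X_pool, of 1 0] \<open>1 < n\<close>
    have "AE \<omega> in M. 0 = Z \<omega>" by (simp add: X_def single_loss_pool_def)
    then have "AE \<omega> in M. Z \<omega> = 0" by (rule eventually_mono) simp
    with Z_nonzero show False by contradiction
  qed
  moreover have "\<not> reshuffling M K n (all_to_first n)"
  proof
    assume "reshuffling M K n (all_to_first n)"
    from reshuffling_all_to_first_AE_agg_zero[OF this X_pool \<open>1 < n\<close>] \<open>1 < n\<close>
    show False using Z_nonzero by (simp add: X_def agg_single_loss_pool)
  qed
  moreover have "rs_rule M K n (all_to_first n)"
    using K_meas \<open>1 < n\<close> by (simp add: rs_rule_all_to_first)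
  ultimately show ?thesis
    using rs_rule_id[OF K_meas] reshuffling_id source_anonymous_all_to_first by blast
qed

end
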